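(* Let $f\in GM$ be real-valued and let $\nu\in\mathbb{R}\setminus\{0\}$. Suppose $t^\nu f(t)\to 0$ as $t\to 0^+$. Then the improper integral $\int_0^\infty t^{\nu-1}f(t)\,dt$ converges if and only if both $t^\nu f(t)\to 0$ as $t\to\infty$ and the improper Stieltjes integral $\int_0^\infty t^\nu\,df(t)$ converges. Moreover, in that case $$\int_0^\infty t^{\nu-1}f(t)\,dt=-\frac{1}{\nu}\int_0^\infty t^\nu\,df(t).$$
   Context: $\mathbb{R}_+=[0,\infty)$. All functions $f:\mathbb{R}_+\to\mathbb{C}$ considered are locally integrable, locally of bounded variation on $(0,\infty)$, and satisfy $f(t)\to 0$ as $t\to\infty$. Integrals over infinite intervals (and integrals $\int_0^\infty$) are understood as improper Riemann (Riemann–Stieltjes) integrals. Such an $f$ is called general monotone, written $f\in GM$, if there exist constants $C>1$ and $\lambda>1$ such that for every $x>0$, $$\int_x^{2x}|df(t)|\le C\int_{x/\lambda}^{\lambda x}\frac{|f(t)|}{t}\,dt,$$ where $|df|$ denotes the total variation measure of $f$. *)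

theory Defs
  imports "HOL-Analysis.Analysis"
begin

definition tagged_partition :: "real \<Rightarrow> real \<Rightarrow> nat \<Rightarrow> (nat \<Rightarrow> real) \<Rightarrow> (nat \<Rightarrow> real) \<Rightarrow> bool" where
  "tagged_partition a b n x xi \<longleftrightarrow>
     x 0 = a \<and> x n = b \<and> (\<forall>i<n. x i < x (Suc i) \<and> x i \<le> xi i \<and> xi i \<le> x (Suc i))"

definition partition :: "real \<Rightarrow> real \<Rightarrow> nat \<Rightarrow> (nat \<Rightarrow> real) \<Rightarrow> bool" where
  "partition a b n x \<longleftrightarrow> x 0 = a \<and> x n = b \<and> (\<forall>i<n. x i < x (Suc i))"

definition var_sums :: "(real \<Rightarrow> real) \<Rightarrow> real \<Rightarrow> real \<Rightarrow> real set" where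
  "var_sums f a b = {(\<Sum>i<n. \<bar>f (x (Suc i)) - f (x i)\<bar>) | n x. partition a b n x}"

definition bounded_variation_on :: "(real \<Rightarrow> real) \<Rightarrow> real \<Rightarrow> real \<Rightarrow> bool" where
  "bounded_variation_on f a b \<longleftrightarrow> bdd_above (var_sums f a b)"

definition total_variation :: "(real \<Rightarrow> real) \<Rightarrow> real \<Rightarrow> real \<Rightarrow> real" where
  "total_variation f a b = Sup (var_sums f a b)"

definition has_RS_integral :: "(real \<Rightarrow> real) \<Rightarrow> (real \<Rightarrow> real) \<Rightarrow> real \<Rightarrow> real \<Rightarrow> real \<Rightarrow> bool" where
  "has_RS_integral g f a b I \<longleftrightarrow>
     (\<forall>e>0. \<exists>d>0. \<forall>n x xi. tagged_partition a b n x xi \<and> (\<forall>i<n. x (Suc i) - x i < d) \<longrightarrow>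
        \<bar>(\<Sum>i<n. g (xi i) * (f (x (Suc i)) - f (x i))) - I\<bar> < e)"

definition RS_integral :: "(real \<Rightarrow> real) \<Rightarrow> (real \<Rightarrow> real) \<Rightarrow> real \<Rightarrow> real \<Rightarrow> real" where
  "RS_integral g f a b = (THE I. has_RS_integral g f a b I)"

definition improper_integral_0_inf :: "(real \<Rightarrow> real) \<Rightarrow> real \<Rightarrow> bool" where
  "improper_integral_0_inf g L \<longleftrightarrow>
     (\<forall>a b. 0 < a \<longrightarrow> a \<le> b \<longrightarrow> g integrable_on {a..b}) \<and>
     ((\<lambda>(a, b). integral {a..b} g) \<longlongrightarrow> L) (at_right 0 \<times>\<^sub>F at_top)"

definition improper_RS_integral_0_inf :: "(real \<Rightarrow> real) \<Rightarrow> (real \<Rightarrow> real) \<Rightarrow> real \<Rightarrow> bool" where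
  "improper_RS_integral_0_inf g f L \<longleftrightarrow>
     (\<forall>a b. 0 < a \<longrightarrow> a \<le> b \<longrightarrow> (\<exists>I. has_RS_integral g f a b I)) \<and>
     ((\<lambda>(a, b). RS_integral g f a b) \<longlongrightarrow> L) (at_right 0 \<times>\<^sub>F at_top)"

definition admissible :: "(real \<Rightarrow> real) \<Rightarrow> bool" where
  "admissible f \<longleftrightarrow>
     (\<forall>b\<ge>0. f absolutely_integrable_on {0..b}) \<and>
     (\<forall>a b. 0 < a \<longrightarrow> a \<le> b \<longrightarrow> bounded_variation_on f a b) \<and>
     (f \<longlongrightarrow> 0) at_top"

definition GM :: "(real \<Rightarrow> real) \<Rightarrow> bool" where
  "GM f \<longleftrightarrow> admissible f \<and>
     (\<exists>C lam. C > 1 \<and> lam > 1 \<and>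
        (\<forall>x>0. total_variation f x (2 * x) \<le> C * integral {x / lam..lam * x} (\<lambda>t. \<bar>f t\<bar> / t)))"

end

theory Submission
  imports Defs
begin

text \<open>
  Integration by parts, \<integral>_a^b t^\<nu> df = b^\<nu> f(b) - a^\<nu> f(a) - \<nu> \<integral>_a^b t^(\<nu>-1) f(t) dt,
  reduces everything to the decay of t^\<nu> f(t) at infinity, which is automatic for \<nu> < 0.
  For \<nu> > 0 consider the dyadic blocks M_k = \<integral> t^(\<nu>-1) |f(t)| dt over [2^k, 2^(k+1)].
  Cut a block into N pieces: on each piece \<integral> t^(\<nu>-1) |f| exceeds |\<integral> t^(\<nu>-1) f| by at most
  length times weight times the variation of f there, so M_k is at most N times the oscillation
  of \<integral> t^(\<nu>-1) f on far blocks (small by the Cauchy criterion) plus 2^(k\<nu>)/N times the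
  variation on the block. The GM condition bounds that variation by 2^(-k\<nu>) times the
  neighbouring blocks M_j, |j - k| \<le> p.
  The resulting inequality M_k \<le> \<epsilon> + \<theta> \<Sum> M_j, with \<theta> as small as we like, and the a priori
  growth M_k = O(2^(k\<nu>)) force M_k \<rightarrow> 0; a pointwise version of the same estimate then gives
  t^\<nu> f(t) \<rightarrow> 0.
\<close>

section \<open>Total variation\<close>

lemma sum_lessThan_add:
  fixes g :: "nat \<Rightarrow> 'a::comm_monoid_add"
  shows "(\<Sum>i<n + m. g i) = (\<Sum>i<n. g i) + (\<Sum>i<m. g (n + i))"
  by (induction m) (auto simp: add_ac)

lemma var_sums_nonneg: "s \<in> var_sums f a b \<Longrightarrow> 0 \<le> s"
  unfolding var_sums_def by (auto intro!: sum_nonneg)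

lemma abs_diff_in_var_sums:
  assumes "a < b"
  shows "\<bar>f b - f a\<bar> \<in> var_sums f a b"
proof -
  have "partition a b 1 (\<lambda>i. if i = 0 then a else b)"
    using assms by (auto simp: partition_def)
  then show ?thesis
    unfolding var_sums_def by (auto intro!: exI[of _ 1] exI[of _ "\<lambda>i. if i = 0 then a else b"])
qed

lemma var_sums_nonempty:
  assumes "a \<le> b"
  shows "var_sums f a b \<noteq> {}"
proof (cases "a < b")
  case True
  then show ?thesis using abs_diff_in_var_sums by blast
next
  case False
  then have "partition a b 0 (\<lambda>i. a)"
    using assms by (auto simp: partition_def)
  then show ?thesis unfolding var_sums_def by blast
qed

lemma partition_append:
  assumes x: "partition a c n x" and y: "partition c b m y"
  shows "partition a b (n + m) (\<lambda>i. if i \<le> n then x i else y (i - n))"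
  unfolding partition_def
proof (intro conjI allI impI)
  fix i assume "i < n + m"
  then show "(if i \<le> n then x i else y (i - n)) < (if Suc i \<le> n then x (Suc i) else y (Suc i - n))"
    using x y by (cases "i < n"; cases "i = n") (auto simp: partition_def Suc_diff_le)
qed (use x y in \<open>auto simp: partition_def\<close>)

lemma var_sums_add:
  assumes "s1 \<in> var_sums f a c" "s2 \<in> var_sums f c b"
  shows "s1 + s2 \<in> var_sums f a b"
proof -
  obtain n x where x: "partition a c n x" "s1 = (\<Sum>i<n. \<bar>f (x (Suc i)) - f (x i)\<bar>)"
    using assms(1) unfolding var_sums_def by blast
  obtain m y where y: "partition c b m y" "s2 = (\<Sum>i<m. \<bar>f (y (Suc i)) - f (y i)\<bar>)"
    using assms(2) unfolding var_sums_def by blast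
  define z where "z i = (if i \<le> n then x i else y (i - n))" for i
  have "(\<Sum>i<n + m. \<bar>f (z (Suc i)) - f (z i)\<bar>) = s1 + s2"
    using x y unfolding sum_lessThan_add z_def
    by (auto simp: partition_def Suc_diff_le intro!: sum.cong)
  with partition_append[OF x(1) y(1)] show ?thesis
    unfolding var_sums_def z_def by (intro CollectI exI conjI) auto
qed

lemma bounded_variation_on_split:
  assumes bv: "bounded_variation_on f a b" and "a \<le> c" "c \<le> b"
  shows "bounded_variation_on f a c" "bounded_variation_on f c b"
    "total_variation f a c + total_variation f c b \<le> total_variation f a b"
proof -
  let ?A = "var_sums f a c" and ?B = "var_sums f c b" and ?V = "total_variation f a b"
  have ne: "?A \<noteq> {}" "?B \<noteq> {}"
    using var_sums_nonempty assms by auto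
  have ub: "s1 + s2 \<le> ?V" if "s1 \<in> ?A" "s2 \<in> ?B" for s1 s2
    using bv var_sums_add[OF that]
    unfolding bounded_variation_on_def total_variation_def by (simp add: cSup_upper)
  obtain s1 s2 where s: "s1 \<in> ?A" "s2 \<in> ?B"
    using ne by blast
  have "bdd_above ?A"
    using ub[OF _ s(2)] var_sums_nonneg[OF s(2)] by (intro bdd_aboveI[of _ ?V]) force
  moreover have "bdd_above ?B"
    using ub[OF s(1)] var_sums_nonneg[OF s(1)] by (intro bdd_aboveI[of _ ?V]) force
  ultimately  show "bounded_variation_on f a c" "bounded_variation_on f c b"
    by (auto simp: bounded_variation_on_def)
  have "Sup ?A \<le> ?V - s2" if "s2 \<in> ?B" for s2
    using ne ub that by (intro cSup_least) force+
  then have "Sup ?B \<le> ?V - Sup ?A"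
    using ne(2) by (intro cSup_least) (auto simp: algebra_simps)
  then show "total_variation f a c + total_variation f c b \<le> ?V"
    unfolding total_variation_def by simp
qed

lemma total_variation_nonneg:
  assumes "bounded_variation_on f a b" "a \<le> b"
  shows "0 \<le> total_variation f a b"
proof -
  obtain s where "s \<in> var_sums f a b"
    using var_sums_nonempty assms by blast
  then show ?thesis
    using assms var_sums_nonneg[of s]
    unfolding bounded_variation_on_def total_variation_def by (meson cSup_upper order_trans)
qed

lemma abs_diff_le_total_variation:
  assumes "bounded_variation_on f a b" "a \<le> b"
  shows "\<bar>f b - f a\<bar> \<le> total_variation f a b"
proof (cases "a < b")
  case True
  then show ?thesis
    using assms abs_diff_in_var_sums[OF True, of f]
    unfolding bounded_variation_on_def total_variation_def by (simp add: cSup_upper)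
next
  case False
  then show ?thesis using total_variation_nonneg[OF assms] assms by auto
qed

lemma total_variation_mono:
  assumes bv: "bounded_variation_on f a b" and "a \<le> c" "c \<le> d" "d \<le> b"
  shows "bounded_variation_on f c d" "total_variation f c d \<le> total_variation f a b"
proof -
  have ac: "bounded_variation_on f a c" "bounded_variation_on f c b"
    "total_variation f a c + total_variation f c b \<le> total_variation f a b"
    using bounded_variation_on_split[OF bv, of c] assms by auto
  have cd: "bounded_variation_on f c d" "bounded_variation_on f d b"
    "total_variation f c d + total_variation f d b \<le> total_variation f c b"
    using bounded_variation_on_split[OF ac(2), of d] assms by auto
  show "bounded_variation_on f c d"
    by (fact cd(1))
  have "0 \<le> total_variation f a c" "0 \<le> total_variation f d b"
    using ac(1) cd(2) assms total_variation_nonneg by auto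
  then show "total_variation f c d \<le> total_variation f a b"
    using ac(3) cd(3) by linarith
qed

lemma abs_diff_le_total_variation_within:
  assumes bv: "bounded_variation_on f a b" and "x \<in> {a..b}" "y \<in> {a..b}"
  shows "\<bar>f y - f x\<bar> \<le> total_variation f a b"
proof -
  have *: "\<bar>f v - f u\<bar> \<le> total_variation f a b" if "u \<in> {a..b}" "v \<in> {a..b}" "u \<le> v" for u v
    using total_variation_mono[OF bv, of u v] abs_diff_le_total_variation[of f u v] that by auto
  show ?thesis
    using *[of x y] *[of y x] assms by (cases "x \<le> y") (auto simp: abs_minus_commute)
qed

lemma sum_total_variation_le:
  assumes "\<And>i. i < N \<Longrightarrow> p i \<le> p (Suc i)" and "bounded_variation_on f (p 0) (p N)"
  shows "(\<Sum>i<N. total_variation f (p i) (p (Suc i))) \<le> total_variation f (p 0) (p N)"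
  using assms
proof (induction N)
  case 0
  then show ?case using total_variation_nonneg by auto
next
  case (Suc N)
  have "p 0 \<le> p N"
    by (rule lift_Suc_mono_le_ivl[where N="{..<Suc N}"]) (use Suc.prems(1) in auto)
  note split = bounded_variation_on_split[OF Suc.prems(2) this]
  have "(\<Sum>i<N. total_variation f (p i) (p (Suc i))) \<le> total_variation f (p 0) (p N)"
    using Suc.prems(1) split(1) by (intro Suc.IH) auto
  then show ?case
    using split(3) Suc.prems(1)[of N] by simp
qed

section \<open>Riemann--Stieltjes integration by parts\<close>

lemma absolutely_integrable_times_continuous:
  fixes f h :: "real \<Rightarrow> real"
  assumes "f absolutely_integrable_on {u..w}" "continuous_on {u..w} h"
  shows "(\<lambda>t. h t * f t) absolutely_integrable_on {u..w}"
  using assms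
  by (intro absolutely_integrable_bounded_measurable_product_real)
    (auto intro!: continuous_imp_measurable_on_sets_lebesgue compact_imp_bounded compact_continuous_image)

lemma integral_sum_partition:
  fixes h :: "real \<Rightarrow> real"
  assumes "\<And>i. i < n \<Longrightarrow> x i \<le> x (Suc i)" and "h integrable_on {x 0..x n}"
  shows "integral {x 0..x n} h = (\<Sum>i<n. integral {x i..x (Suc i)} h)"
  using assms
proof (induction n)
  case 0
  then show ?case by simp
next
  case (Suc n)
  have le: "x 0 \<le> x n" "x n \<le> x (Suc n)"
    by (rule lift_Suc_mono_le_ivl[where N="{..<Suc n}"]) (use Suc.prems(1) in auto)
  then have "h integrable_on {x 0..x n}"
    using integrable_subinterval_real[OF Suc.prems(2)] by auto
  then show ?case
    using Suc Henstock_Kurzweil_Integration.integral_combine[OF le Suc.prems(2)] by simp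
qed

lemma abs_integral_times_variation_le:
  fixes f g :: "real \<Rightarrow> real"
  assumes bv: "bounded_variation_on f u w" and sub: "{s..r} \<subseteq> {u..w}" and "s \<le> r" "c \<in> {u..w}"
    and int: "(\<lambda>t. g t * (f t - f c)) integrable_on {s..r}"
    and K: "\<And>t. t \<in> {s..r} \<Longrightarrow> \<bar>g t\<bar> \<le> K"
  shows "\<bar>integral {s..r} (\<lambda>t. g t * (f t - f c))\<bar> \<le> (r - s) * K * total_variation f u w"
proof -
  let ?V = "total_variation f u w"
  have "norm (integral {s..r} (\<lambda>t. g t * (f t - f c))) \<le> integral {s..r} (\<lambda>t. K * ?V)"
  proof (rule integral_norm_bound_integral[OF int])
    fix t assume t: "t \<in> {s..r}"
    have "\<bar>f t - f c\<bar> \<le> ?V"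
      using abs_diff_le_total_variation_within[OF bv] t sub assms(4) by auto
    moreover have "0 \<le> \<bar>f t - f c\<bar>" "0 \<le> K"
      using K[OF t] by auto
    ultimately show "norm (g t * (f t - f c)) \<le> K * ?V"
      using K[OF t] by (simp add: abs_mult mult_mono')
  qed (rule Henstock_Kurzweil_Integration.integrable_const_ivl)
  then show ?thesis
    using assms(3) by (simp add: mult_ac)
qed

lemma RS_piece_by_parts_error:
  fixes f g g' :: "real \<Rightarrow> real"
  assumes \<xi>: "u \<le> \<xi>" "\<xi> \<le> w"
    and fi: "f absolutely_integrable_on {u..w}" and bv: "bounded_variation_on f u w"
    and gd: "\<And>t. t \<in> {u..w} \<Longrightarrow> (g has_real_derivative g' t) (at t)"
    and gc: "continuous_on {u..w} g'"
    and K: "\<And>t. t \<in> {u..w} \<Longrightarrow> \<bar>g' t\<bar> \<le> K"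
  shows "\<bar>g \<xi> * (f w - f u) - (g w * f w - g u * f u) + integral {u..w} (\<lambda>t. g' t * f t)\<bar>
          \<le> (w - u) * K * total_variation f u w"
proof -
  let ?V = "total_variation f u w"
  have gf: "(\<lambda>t. g' t * f t) integrable_on {u..w}"
    using absolutely_integrable_times_continuous[OF fi gc] by (simp add: absolutely_integrable_on_def)
  have ftc: "(g' has_integral (g r - g s)) {s..r}" if "u \<le> s" "s \<le> r" "r \<le> w" for s r
    using that gd
    by (intro fundamental_theorem_of_calculus)
      (auto simp: has_real_derivative_iff_has_vector_derivative intro: has_vector_derivative_at_within)
  \<comment> \<open>Subtracting \<open>f u\<close> on \<open>[u, \<xi>]\<close> and \<open>f w\<close> on \<open>[\<xi>, w]\<close> turns the boundary terms
      into integrals.\<close>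
  have I: "((\<lambda>t. g' t * (f t - f c)) has_integral
              integral {s..r} (\<lambda>t. g' t * f t) - f c * (g r - g s)) {s..r}"
    if "u \<le> s" "s \<le> r" "r \<le> w" for s r c
  proof -
    have "(\<lambda>t. g' t * f t) integrable_on {s..r}"
      using integrable_subinterval_real[OF gf] that by auto
    then have "((\<lambda>t. g' t * f t - f c * g' t) has_integral
                integral {s..r} (\<lambda>t. g' t * f t) - f c * (g r - g s)) {s..r}"
      using that by (intro has_integral_diff integrable_integral has_integral_mult_right ftc)
    then show ?thesis
      by (simp add: algebra_simps)
  qed
  note I1 = I[of u \<xi> u] and I2 = I[of \<xi> w w]
  have "g \<xi> * (f w - f u) - (g w * f w - g u * f u) + integral {u..w} (\<lambda>t. g' t * f t)
      = integral {u..\<xi>} (\<lambda>t. g' t * (f t - f u)) + integral {\<xi>..w} (\<lambda>t. g' t * (f t - f w))"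
    using integral_unique[OF I1] integral_unique[OF I2] \<xi> Henstock_Kurzweil_Integration.integral_combine[OF \<xi> gf]
    by (simp add: algebra_simps)
  moreover have "\<bar>integral {u..\<xi>} (\<lambda>t. g' t * (f t - f u))\<bar> \<le> (\<xi> - u) * K * ?V"
    using \<xi> I1 K by (intro abs_integral_times_variation_le[OF bv]) auto
  moreover have "\<bar>integral {\<xi>..w} (\<lambda>t. g' t * (f t - f w))\<bar> \<le> (w - \<xi>) * K * ?V"
    using \<xi> I2 K by (intro abs_integral_times_variation_le[OF bv]) auto
  ultimately show ?thesis
    by (simp add: algebra_simps)
qed

lemma tagged_partition_mono:
  assumes "tagged_partition a b n x xi" "i \<le> j" "j \<le> n"
  shows "x i \<le> x j"
  by (rule lift_Suc_mono_le_ivl[where N="{..<n}"])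
    (use assms in \<open>auto simp: tagged_partition_def intro: less_imp_le\<close>)

lemma RS_sum_by_parts_error:
  fixes f g g' :: "real \<Rightarrow> real"
  assumes tp: "tagged_partition a b n x xi" and "0 \<le> d" and mesh: "\<forall>i<n. x (Suc i) - x i < d"
    and fi: "f absolutely_integrable_on {a..b}" and bv: "bounded_variation_on f a b"
    and gd: "\<And>t. t \<in> {a..b} \<Longrightarrow> (g has_real_derivative g' t) (at t)"
    and gc: "continuous_on {a..b} g'"
    and K: "\<And>t. t \<in> {a..b} \<Longrightarrow> \<bar>g' t\<bar> \<le> K"
  shows "\<bar>(\<Sum>i<n. g (xi i) * (f (x (Suc i)) - f (x i)))
           - (g b * f b - g a * f a - integral {a..b} (\<lambda>t. g' t * f t))\<bar>
         \<le> d * K * total_variation f a b"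
proof -
  have ends: "x 0 = a" "x n = b" and tag: "\<And>i. i < n \<Longrightarrow> x i \<le> xi i \<and> xi i \<le> x (Suc i)"
    using tp unfolding tagged_partition_def by auto
  have step: "x i \<le> x (Suc i)" if "i < n" for i
    using tagged_partition_mono[OF tp] that by simp
  have sub: "a \<le> x i" "x (Suc i) \<le> b" if "i < n" for i
    using tagged_partition_mono[OF tp, of 0 i] tagged_partition_mono[OF tp, of "Suc i" n] ends that by auto
  have "a \<in> {a..b}"
    using tagged_partition_mono[OF tp, of 0 n] ends by simp
  then have K0: "0 \<le> K"
    using abs_ge_zero[of "g' a"] K by (meson order_trans)
  define T where "T i = g (xi i) * (f (x (Suc i)) - f (x i)) - (g (x (Suc i)) * f (x (Suc i)) - g (x i) * f (x i))
      + integral {x i..x (Suc i)} (\<lambda>t. g' t * f t)" for i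
  have "(\<Sum>i<n. g (x (Suc i)) * f (x (Suc i)) - g (x i) * f (x i)) = g b * f b - g a * f a"
    using sum_lessThan_telescope[of "\<lambda>i. g (x i) * f (x i)" n] ends by simp
  moreover have "integral {a..b} (\<lambda>t. g' t * f t) = (\<Sum>i<n. integral {x i..x (Suc i)} (\<lambda>t. g' t * f t))"
    using integral_sum_partition[of n x, OF step] ends absolutely_integrable_times_continuous[OF fi gc]
    by (auto simp: absolutely_integrable_on_def)
  ultimately have "(\<Sum>i<n. g (xi i) * (f (x (Suc i)) - f (x i)))
      - (g b * f b - g a * f a - integral {a..b} (\<lambda>t. g' t * f t)) = (\<Sum>i<n. T i)"
    unfolding T_def sum.distrib sum_subtractf by simp
  also have "\<bar>\<Sum>i<n. T i\<bar> \<le> (\<Sum>i<n. d * K * total_variation f (x i) (x (Suc i)))"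
  proof (intro order.trans[OF sum_abs] sum_mono)
    fix i assume "i \<in> {..<n}"
    then have i: "i < n" by simp
    have bvi: "bounded_variation_on f (x i) (x (Suc i))"
      using total_variation_mono(1)[OF bv sub(1)[OF i] step[OF i] sub(2)[OF i]] .
    have sub_i: "{x i..x (Suc i)} \<subseteq> {a..b}"
      using sub[OF i] by auto
    have "\<bar>T i\<bar> \<le> (x (Suc i) - x i) * K * total_variation f (x i) (x (Suc i))"
      unfolding T_def
    proof (rule RS_piece_by_parts_error)
      show "x i \<le> xi i" "xi i \<le> x (Suc i)"
        using tag[OF i] by auto
      show "f absolutely_integrable_on {x i..x (Suc i)}"
        using absolutely_integrable_on_subinterval[OF fi sub_i] .
      show "continuous_on {x i..x (Suc i)} g'"
        using continuous_on_subset[OF gc sub_i] .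
    qed (use bvi gd K sub_i in blast)+
    also have "\<dots> \<le> d * K * total_variation f (x i) (x (Suc i))"
      using mesh i total_variation_nonneg[OF bvi step[OF i]] K0 by (intro mult_right_mono) auto
    finally show "\<bar>T i\<bar> \<le> d * K * total_variation f (x i) (x (Suc i))" .
  qed
  also have "\<dots> \<le> d * K * total_variation f a b"
    unfolding sum_distrib_left[symmetric]
    using sum_total_variation_le[of n x f, OF step] bv ends K0 \<open>0 \<le> d\<close>
    by (intro mult_left_mono) auto
  finally show ?thesis .
qed

lemma has_RS_integral_by_parts:
  fixes f g g' :: "real \<Rightarrow> real"
  assumes ab: "a \<le> b"
    and fi: "f absolutely_integrable_on {a..b}" and bv: "bounded_variation_on f a b"
    and gd: "\<And>t. t \<in> {a..b} \<Longrightarrow> (g has_real_derivative g' t) (at t)"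
    and gc: "continuous_on {a..b} g'"
  shows "has_RS_integral g f a b (g b * f b - g a * f a - integral {a..b} (\<lambda>t. g' t * f t))"
  unfolding has_RS_integral_def
proof (intro allI impI)
  fix e :: real assume e: "e > 0"
  obtain K where K0: "K > 0" and K: "\<And>t. t \<in> {a..b} \<Longrightarrow> \<bar>g' t\<bar> \<le> K"
    using compact_imp_bounded[OF compact_continuous_image[OF gc compact_Icc]]
    unfolding bounded_pos by force
  define V where "V = total_variation f a b"
  have V0: "0 \<le> V"
    unfolding V_def using total_variation_nonneg[OF bv ab] .
  define d where "d = e / (K * (V + 1))"
  have "d > 0"
    unfolding d_def using e K0 V0 by auto
  moreover have "d * K * V < e"
  proof -
    have "K + K * V > 0"
      using K0 V0 by (simp add: add_pos_nonneg)
    then have "d * K = e / (V + 1)"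
      unfolding d_def using K0 V0 by (simp add: field_simps)
    then have "d * K * V = e * (V / (V + 1))"
      by simp
    also have "\<dots> < e * 1"
      using e V0 by (intro mult_strict_left_mono) auto
    finally show ?thesis by simp
  qed
  ultimately show "\<exists>d>0. \<forall>n x xi. tagged_partition a b n x xi \<and> (\<forall>i<n. x (Suc i) - x i < d) \<longrightarrow>
      \<bar>(\<Sum>i<n. g (xi i) * (f (x (Suc i)) - f (x i)))
        - (g b * f b - g a * f a - integral {a..b} (\<lambda>t. g' t * f t))\<bar> < e"
  proof (intro exI[of _ d] conjI allI impI)
    fix n x xi
    assume "tagged_partition a b n x xi \<and> (\<forall>i<n. x (Suc i) - x i < d)"
    then have "\<bar>(\<Sum>i<n. g (xi i) * (f (x (Suc i)) - f (x i)))
        - (g b * f b - g a * f a - integral {a..b} (\<lambda>t. g' t * f t))\<bar> \<le> d * K * V"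
      unfolding V_def using \<open>d > 0\<close> by (intro RS_sum_by_parts_error[OF _ _ _ fi bv gd gc K]) auto
    with \<open>d * K * V < e\<close> show "\<bar>(\<Sum>i<n. g (xi i) * (f (x (Suc i)) - f (x i)))
        - (g b * f b - g a * f a - integral {a..b} (\<lambda>t. g' t * f t))\<bar> < e"
      by linarith
  qed
qed

lemma exists_fine_tagged_partition:
  assumes ab: "a \<le> b" and d: "d > 0"
  shows "\<exists>n x xi. tagged_partition a b n x xi \<and> (\<forall>i<n. x (Suc i) - x i < d)"
proof (cases "a = b")
  case True
  then have "tagged_partition a b 0 (\<lambda>_. a) (\<lambda>_. a)"
    by (simp add: tagged_partition_def)
  then show ?thesis by blast
next
  case False
  define n :: nat where "n = nat \<lceil>(b - a) / d\<rceil> + 1"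
  have n0: "n > 0"
    unfolding n_def by simp
  have "(b - a) / d < real n"
    unfolding n_def by linarith
  then have width: "(b - a) / real n < d"
    using n0 d by (simp add: field_simps)
  define x where "x i = a + real i * (b - a) / real n" for i
  have "tagged_partition a b n x x"
    unfolding tagged_partition_def x_def using n0 ab False by (auto simp: field_simps)
  moreover have "x (Suc i) - x i = (b - a) / real n" for i
    unfolding x_def using n0 by (simp add: field_simps)
  ultimately show ?thesis
    using width by (intro exI[of _ n] exI[of _ x]) auto
qed

lemma has_RS_integral_unique:
  assumes "has_RS_integral g f a b I" "has_RS_integral g f a b J" "a \<le> b"
  shows "I = J"
proof (rule ccontr)
  assume "I \<noteq> J"
  then have e: "\<bar>I - J\<bar> / 2 > 0" by simp
  obtain d1 where "d1 > 0"
    and d1: "\<forall>n x xi. tagged_partition a b n x xi \<and> (\<forall>i<n. x (Suc i) - x i < d1) \<longrightarrow>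
        \<bar>(\<Sum>i<n. g (xi i) * (f (x (Suc i)) - f (x i))) - I\<bar> < \<bar>I - J\<bar> / 2"
    using assms(1)[unfolded has_RS_integral_def, rule_format, OF e] by blast
  obtain d2 where "d2 > 0"
    and d2: "\<forall>n x xi. tagged_partition a b n x xi \<and> (\<forall>i<n. x (Suc i) - x i < d2) \<longrightarrow>
        \<bar>(\<Sum>i<n. g (xi i) * (f (x (Suc i)) - f (x i))) - J\<bar> < \<bar>I - J\<bar> / 2"
    using assms(2)[unfolded has_RS_integral_def, rule_format, OF e] by blast
  obtain n x xi where p: "tagged_partition a b n x xi" "\<forall>i<n. x (Suc i) - x i < min d1 d2"
    using exists_fine_tagged_partition[OF assms(3), of "min d1 d2"] \<open>d1 > 0\<close> \<open>d2 > 0\<close> by auto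
  then have "\<forall>i<n. x (Suc i) - x i < d1" "\<forall>i<n. x (Suc i) - x i < d2"
    by auto
  note SI = d1[rule_format, OF conjI[OF p(1) this(1)]] and SJ = d2[rule_format, OF conjI[OF p(1) this(2)]]
  have "\<bar>I - J\<bar> \<le> \<bar>S - I\<bar> + \<bar>S - J\<bar>" for S
    using abs_triangle_ineq[of "I - S" "S - J"] by (simp add: abs_minus_commute)
  from this[of "\<Sum>i<n. g (xi i) * (f (x (Suc i)) - f (x i))"] add_strict_mono[OF SI SJ] show False
    by simp
qed

lemma RS_integral_eqI:
  assumes "has_RS_integral g f a b I" "a \<le> b"
  shows "RS_integral g f a b = I"
  unfolding RS_integral_def using has_RS_integral_unique assms by blast

section \<open>A recursive inequality for sequences\<close>

lemma exists_ge_average: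
  fixes a :: "nat \<Rightarrow> real"
  assumes "m > 0" "s \<le> (\<Sum>i<m. a i)"
  shows "\<exists>i<m. s / real m \<le> a i"
proof (rule ccontr)
  assume "\<not> ?thesis"
  then have "(\<Sum>i<m. a i) < (\<Sum>i<m. s / real m)"
    using assms(1) by (intro sum_strict_mono) auto
  then show False
    using assms by simp
qed

lemma le_bound_if_large_values_jump:
  fixes M :: "nat \<Rightarrow> real" and \<rho> A B :: real
  assumes M0: "\<And>k. 0 \<le> M k" and \<rho>: "1 \<le> \<rho>" and grow: "\<And>k. M k \<le> A * \<rho> ^ k"
    and B: "0 \<le> B" and jump: "\<And>k. B < M k \<Longrightarrow> \<exists>k'\<le>k + p. 2 * \<rho> ^ p * M k \<le> M k'"
  shows "M k \<le> B"
proof (rule ccontr)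
  assume "\<not> M k \<le> B"
  then have Mk: "B < M k" and Mk0: "0 < M k"
    using B by auto
  have \<rho>p: "1 \<le> \<rho> ^ p"
    using \<rho> by simp
  have chain: "\<exists>k'\<le>k + j * p. (2 * \<rho> ^ p) ^ j * M k \<le> M k'" for j
  proof (induction j)
    case (Suc j)
    then obtain k' where k': "k' \<le> k + j * p" "(2 * \<rho> ^ p) ^ j * M k \<le> M k'"
      by blast
    have "1 \<le> (2 * \<rho> ^ p) ^ j"
      using \<rho>p by (intro one_le_power) auto
    then have "M k \<le> (2 * \<rho> ^ p) ^ j * M k"
      using mult_right_mono[of 1 _ "M k"] Mk0 by simp
    then obtain k'' where "k'' \<le> k' + p" "2 * \<rho> ^ p * M k' \<le> M k''"
      using jump[of k'] k' Mk by force
    moreover have "(2 * \<rho> ^ p) ^ Suc j * M k \<le> 2 * \<rho> ^ p * M k'"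
      using k'(2) \<rho>p by (simp add: mult.assoc)
    ultimately show ?case
      using k'(1) by (intro exI[of _ k'']) auto
  qed (intro exI[of _ k], simp)
  obtain j where j: "A * \<rho> ^ k / M k < 2 ^ j"
    using real_arch_pow[of 2] by auto
  obtain k' where k': "k' \<le> k + j * p" "(2 * \<rho> ^ p) ^ j * M k \<le> M k'"
    using chain by blast
  have A0: "0 \<le> A"
    using grow[of 0] M0[of 0] by simp
  have "2 ^ j * M k * (\<rho> ^ p) ^ j = (2 * \<rho> ^ p) ^ j * M k"
    by (simp add: power_mult_distrib mult_ac)
  also have "\<dots> \<le> A * \<rho> ^ k'"
    using k'(2) grow[of k'] by linarith
  also have "\<dots> \<le> A * \<rho> ^ (k + j * p)"
    using k'(1) \<rho> A0 by (intro mult_left_mono power_increasing) auto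
  also have "\<dots> = A * \<rho> ^ k * (\<rho> ^ p) ^ j"
    by (simp add: power_add power_mult mult.commute[of j p])
  finally have "2 ^ j * M k * (\<rho> ^ p) ^ j \<le> A * \<rho> ^ k * (\<rho> ^ p) ^ j" .
  then have "2 ^ j * M k \<le> A * \<rho> ^ k"
    using \<rho>p by simp
  then show False
    using j Mk0 by (simp add: field_simps)
qed

lemma neighbour_recursion_bounded:
  fixes M :: "nat \<Rightarrow> real" and \<rho> \<theta> A :: real
  assumes M0: "\<And>k. 0 \<le> M k" and p: "1 \<le> p" and \<rho>: "1 \<le> \<rho>"
    and \<theta>: "0 < \<theta>" "\<theta> * (8 * real p * \<rho> ^ p) \<le> 1"
    and grow: "\<And>k. M k \<le> A * \<rho> ^ k"
    and "p \<le> K" and rec: "\<And>k. K \<le> k \<Longrightarrow> M k \<le> 1 + \<theta> * (\<Sum>i<2*p. M (k - p + i))"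
  shows "\<exists>B\<ge>0. \<forall>k. M k \<le> B"
proof -
  define B where "B = max 2 (Max (M ` {..<K}))"
  have below_K: "M k \<le> B" if "k < K" for k
  proof -
    have "M k \<le> Max (M ` {..<K})"
      using that by (intro Max.coboundedI) auto
    then show ?thesis
      unfolding B_def by linarith
  qed
  \<comment> \<open>A value above \<open>B\<close> lies beyond \<open>K\<close> and exceeds \<open>2\<close>, so the recursion makes some
      neighbour at least \<open>2 \<rho>^p\<close> times larger.\<close>
  have "\<exists>k'\<le>k + p. 2 * \<rho> ^ p * M k \<le> M k'" if Mk: "B < M k" for k
  proof -
    have "K \<le> k" "2 < M k"
      using below_K[of k] Mk unfolding B_def by force+
    then have "M k / (2 * \<theta>) \<le> (\<Sum>i<2*p. M (k - p + i))"
      using rec[of k] \<theta>(1) by (simp add: field_simps)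
    then obtain i where i: "i < 2 * p" "M k / (2 * \<theta>) / real (2 * p) \<le> M (k - p + i)"
      using exists_ge_average[of "2 * p"] p by force
    have "2 * \<rho> ^ p * M k * (4 * real p * \<theta>) \<le> M k"
      using mult_right_mono[OF \<theta>(2) M0[of k]] by (simp add: algebra_simps)
    then have "2 * \<rho> ^ p * M k \<le> M k / (2 * \<theta>) / real (2 * p)"
      using \<theta>(1) p by (simp add: field_simps)
    \<comment> \<open>\<open>p \<le> K\<close> keeps \<open>k - p\<close> from truncating.\<close>
    with i \<open>p \<le> K\<close> \<open>K \<le> k\<close> show ?thesis
      by (intro exI[of _ "k - p + i"]) auto
  qed
  moreover have "0 \<le> B"
    unfolding B_def by simp
  ultimately show ?thesis
    using le_bound_if_large_values_jump[OF M0 \<rho> grow] by blast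
qed

lemma neighbour_recursion_contracts:
  fixes M :: "nat \<Rightarrow> real" and \<theta> \<epsilon> B :: real
  assumes B: "\<And>k. M k \<le> B" and "0 \<le> \<epsilon>" and \<theta>: "0 \<le> \<theta>" "2 * real p * \<theta> \<le> 1 / 2"
    and rec: "\<And>k. K \<le> k \<Longrightarrow> M k \<le> \<epsilon> + \<theta> * (\<Sum>i<2*p. M (k - p + i))"
  shows "K + n * p \<le> k \<Longrightarrow> M k \<le> (2 * real p * \<theta>) ^ n * B + 2 * \<epsilon>"
proof (induction n arbitrary: k)
  case 0
  then show ?case using B[of k] \<open>0 \<le> \<epsilon>\<close> by simp
next
  case (Suc n)
  let ?q = "2 * real p * \<theta>"
  have "(\<Sum>i<2*p. M (k - p + i)) \<le> (\<Sum>i<2*p. ?q ^ n * B + 2 * \<epsilon>)"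
    using Suc by (intro sum_mono Suc.IH) auto
  then have S: "(\<Sum>i<2*p. M (k - p + i)) \<le> 2 * real p * (?q ^ n * B + 2 * \<epsilon>)"
    by simp
  have "K \<le> k"
    using Suc.prems by simp
  then have "M k \<le> \<epsilon> + \<theta> * (\<Sum>i<2*p. M (k - p + i))"
    by (rule rec)
  also have "\<dots> \<le> \<epsilon> + \<theta> * (2 * real p * (?q ^ n * B + 2 * \<epsilon>))"
    using S \<theta>(1) by (intro add_left_mono mult_left_mono) auto
  also have "\<dots> = \<epsilon> + ?q ^ Suc n * B + ?q * (2 * \<epsilon>)"
    by (simp add: algebra_simps)
  also have "\<dots> \<le> ?q ^ Suc n * B + 2 * \<epsilon>"
    using mult_right_mono[OF \<theta>(2), of "2 * \<epsilon>"] \<open>0 \<le> \<epsilon>\<close> by simp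
  finally show ?case .
qed

lemma neighbour_recursion_tendsto_zero:
  fixes M :: "nat \<Rightarrow> real" and \<rho> \<theta> A :: real
  assumes M0: "\<And>k. 0 \<le> M k" and p: "1 \<le> p" and \<rho>: "1 \<le> \<rho>"
    and \<theta>: "0 < \<theta>" "\<theta> * (8 * real p * \<rho> ^ p) \<le> 1"
    and grow: "\<And>k. M k \<le> A * \<rho> ^ k"
    and rec: "\<And>\<epsilon>. 0 < \<epsilon> \<Longrightarrow> \<forall>\<^sub>F k in sequentially. M k \<le> \<epsilon> + \<theta> * (\<Sum>i<2*p. M (k - p + i))"
  shows "M \<longlonglongrightarrow> 0"
proof (rule LIMSEQ_I)
  fix \<delta> :: real assume \<delta>: "0 < \<delta>"
  obtain K1 where K1: "\<And>k. K1 \<le> k \<Longrightarrow> M k \<le> 1 + \<theta> * (\<Sum>i<2*p. M (k - p + i))"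
    using rec[of 1] unfolding eventually_sequentially by auto
  have "M k \<le> 1 + \<theta> * (\<Sum>i<2*p. M (k - p + i))" if "max K1 p \<le> k" for k
    using that by (intro K1) simp
  then have "\<exists>B\<ge>0. \<forall>k. M k \<le> B"
    by (rule neighbour_recursion_bounded[OF M0 p \<rho> \<theta> grow max.cobounded2])
  then obtain B where B: "0 \<le> B" "\<And>k. M k \<le> B"
    by blast
  obtain K where K: "\<And>k. K \<le> k \<Longrightarrow> M k \<le> \<delta> / 4 + \<theta> * (\<Sum>i<2*p. M (k - p + i))"
    using rec[of "\<delta> / 4"] \<delta> unfolding eventually_sequentially by auto
  define q where "q = 2 * real p * \<theta>"
  have "8 * real p * 1 \<le> 8 * real p * \<rho> ^ p"
    using \<rho> by (intro mult_left_mono) auto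
  then have "\<theta> * (8 * real p) \<le> \<theta> * (8 * real p * \<rho> ^ p)"
    using \<theta>(1) by (intro mult_left_mono) auto
  then have "\<theta> * (8 * real p) \<le> 1"
    using \<theta>(2) by linarith
  then have q: "0 \<le> q" "q \<le> 1 / 2"
    using \<theta>(1) unfolding q_def by (auto simp: algebra_simps)
  obtain n where n: "q ^ n < \<delta> / (2 * (B + 1))"
    using real_arch_pow_inv[of "\<delta> / (2 * (B + 1))" q] \<delta> B q by auto
  have "q ^ n * B \<le> q ^ n * (B + 1)"
    using q by (intro mult_left_mono) auto
  also have "\<dots> < \<delta> / (2 * (B + 1)) * (B + 1)"
    using n B by (intro mult_strict_right_mono) auto
  also have "\<dots> = \<delta> / 2"
    using B by (simp add: field_simps)
  finally have "M k < \<delta>" if "K + n * p \<le> k" for k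
    using neighbour_recursion_contracts[OF B(2) _ _ _ K that] \<delta> \<theta>(1) q unfolding q_def by force
  then show "\<exists>N. \<forall>k\<ge>N. norm (M k - 0) < \<delta>"
    using M0 by auto
qed

section \<open>Estimates on dyadic blocks\<close>

lemma admissible_bounded_variation_on:
  assumes "admissible f" "0 < a" "a \<le> b"
  shows "bounded_variation_on f a b"
  using assms unfolding admissible_def by auto

lemma admissible_absolutely_integrable_on:
  assumes "admissible f" "0 \<le> y"
  shows "f absolutely_integrable_on {y..z}"
proof -
  have "f absolutely_integrable_on {0..max z 0}"
    using assms unfolding admissible_def by auto
  then show ?thesis
    by (rule absolutely_integrable_on_subinterval) (use assms in auto)
qed

lemma admissible_integrable_times_continuous:
  fixes f w :: "real \<Rightarrow> real"
  assumes "admissible f" "0 \<le> y" "continuous_on {y..z} w"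
  shows "(\<lambda>t. w t * f t) integrable_on {y..z}" "(\<lambda>t. w t * \<bar>f t\<bar>) integrable_on {y..z}"
proof -
  note fi = admissible_absolutely_integrable_on[OF assms(1,2)]
  show "(\<lambda>t. w t * f t) integrable_on {y..z}"
    using absolutely_integrable_times_continuous[OF fi assms(3)]
    by (simp add: absolutely_integrable_on_def)
  show "(\<lambda>t. w t * \<bar>f t\<bar>) integrable_on {y..z}"
    using absolutely_integrable_times_continuous[OF absolutely_integrable_abs[OF fi] assms(3)]
    by (simp add: absolutely_integrable_on_def)
qed

lemma admissible_integrable_powr:
  assumes "admissible f" "0 < y"
  shows "(\<lambda>t. t powr s * f t) integrable_on {y..z}" "(\<lambda>t. t powr s * \<bar>f t\<bar>) integrable_on {y..z}"
proof -
  have "continuous_on {y..z} (\<lambda>t. t powr s)"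
    using assms(2) by (intro continuous_intros) auto
  then show "(\<lambda>t. t powr s * f t) integrable_on {y..z}" "(\<lambda>t. t powr s * \<bar>f t\<bar>) integrable_on {y..z}"
    using admissible_integrable_times_continuous[OF assms(1) less_imp_le[OF assms(2)]] by auto
qed

lemma powr_doubling_bounds:
  fixes x t s :: real
  assumes "0 < x" "x \<le> t" "t \<le> 2 * x"
  shows "t powr s \<le> 2 powr \<bar>s\<bar> * x powr s" "x powr s \<le> 2 powr \<bar>s\<bar> * t powr s"
proof -
  have dbl: "(2 * x) powr s = 2 powr s * x powr s"
    using assms by (simp add: powr_mult)
  have "1 \<le> 2 powr \<bar>s\<bar>"
    by (rule ge_one_powr_ge_zero) auto
  then have one: "y \<le> 2 powr \<bar>s\<bar> * y" if "0 \<le> y" for y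
    using mult_right_mono[OF _ that] by fastforce
  have "t powr s \<le> 2 powr \<bar>s\<bar> * x powr s \<and> x powr s \<le> 2 powr \<bar>s\<bar> * t powr s"
  proof (cases "0 \<le> s")
    case True
    have "t powr s \<le> (2 * x) powr s" "x powr s \<le> t powr s"
      using True assms by (auto intro!: powr_mono2)
    then show ?thesis
      using True dbl one[of "t powr s"] by simp
  next
    case False
    have "t powr s \<le> x powr s" "(2 * x) powr s \<le> t powr s"
      using False assms by (auto intro!: powr_mono2')
    then have "t powr s \<le> 2 powr \<bar>s\<bar> * x powr s" "2 powr - s * (2 powr s * x powr s) \<le> 2 powr - s * t powr s"
      using one[of "x powr s"] dbl by (auto intro!: mult_left_mono)
    then show ?thesis
      using False by (simp add: powr_add[symmetric] mult.assoc[symmetric])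
  qed
  then show "t powr s \<le> 2 powr \<bar>s\<bar> * x powr s" "x powr s \<le> 2 powr \<bar>s\<bar> * t powr s"
    by auto
qed

lemma integral_weighted_abs_le:
  fixes f W :: "real \<Rightarrow> real"
  assumes bv: "bounded_variation_on f u w" and "u \<le> w"
    and int: "(\<lambda>t. W t * \<bar>f t\<bar>) integrable_on {u..w}"
    and W: "\<And>t. t \<in> {u..w} \<Longrightarrow> 0 \<le> W t \<and> W t \<le> Wm"
  shows "integral {u..w} (\<lambda>t. W t * \<bar>f t\<bar>)
     \<le> \<bar>integral {u..w} (\<lambda>t. W t * f t)\<bar> + (w - u) * Wm * total_variation f u w"
proof -
  let ?V = "total_variation f u w"
  have rest: "0 \<le> (w - u) * Wm * ?V"
    using W[of u] \<open>u \<le> w\<close> total_variation_nonneg[OF bv \<open>u \<le> w\<close>] by simp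
  \<comment> \<open>Either \<open>f\<close> has constant sign on \<open>[u, w]\<close>, or \<open>|f|\<close> is bounded by the variation there.\<close>
  consider (pos) "\<forall>t\<in>{u..w}. 0 \<le> f t" | (neg) "\<forall>t\<in>{u..w}. f t \<le> 0"
    | (mix) t1 t2 where "t1 \<in> {u..w}" "t2 \<in> {u..w}" "f t1 < 0" "0 < f t2"
    by (meson not_le)
  then show ?thesis
  proof cases
    case pos
    then have "integral {u..w} (\<lambda>t. W t * \<bar>f t\<bar>) = integral {u..w} (\<lambda>t. W t * f t)"
      by (intro integral_cong) auto
    then show ?thesis
      using rest by linarith
  next
    case neg
    then have "integral {u..w} (\<lambda>t. W t * \<bar>f t\<bar>) = integral {u..w} (\<lambda>t. - (W t * f t))"
      by (intro integral_cong) auto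
    then show ?thesis
      using rest by (simp add: integral_neg)
  next
    case mix
    have "W t * \<bar>f t\<bar> \<le> Wm * ?V" if t: "t \<in> {u..w}" for t
    proof -
      have "\<bar>f t - f t1\<bar> \<le> ?V" "\<bar>f t2 - f t\<bar> \<le> ?V"
        using abs_diff_le_total_variation_within[OF bv] t mix by auto
      then have "\<bar>f t\<bar> \<le> ?V"
        using mix by linarith
      then show ?thesis
        using W[OF t] by (intro mult_mono) auto
    qed
    then have "integral {u..w} (\<lambda>t. W t * \<bar>f t\<bar>) \<le> integral {u..w} (\<lambda>t. Wm * ?V)"
      by (intro integral_le[OF int]) auto
    then have "integral {u..w} (\<lambda>t. W t * \<bar>f t\<bar>) \<le> (w - u) * Wm * ?V"
      using \<open>u \<le> w\<close> by (simp add: mult_ac)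
    then show ?thesis
      using abs_ge_zero[of "integral {u..w} (\<lambda>t. W t * f t)"] by linarith
  qed
qed

definition block_integral :: "(real \<Rightarrow> real) \<Rightarrow> real \<Rightarrow> real \<Rightarrow> real" where
  "block_integral f \<nu> x = integral {x..2 * x} (\<lambda>t. t powr (\<nu> - 1) * \<bar>f t\<bar>)"

lemma block_integral_nonneg:
  assumes "admissible f" "0 < x"
  shows "0 \<le> block_integral f \<nu> x"
  unfolding block_integral_def
  using admissible_integrable_powr(2)[OF assms] by (intro integral_nonneg) auto

lemma block_integral_le_oscillation:
  fixes f :: "real \<Rightarrow> real" and N :: nat
  assumes adm: "admissible f" and x: "0 < x" and N: "0 < N"
    and osc: "\<And>u v. x \<le> u \<Longrightarrow> u \<le> v \<Longrightarrow> v \<le> 2 * x \<Longrightarrow> \<bar>integral {u..v} (\<lambda>t. t powr (\<nu> - 1) * f t)\<bar> \<le> \<eta>"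
  shows "block_integral f \<nu> x \<le> real N * \<eta> + 2 powr \<bar>\<nu> - 1\<bar> * x powr \<nu> / real N * total_variation f x (2 * x)"
proof -
  define q where "q i = x + real i * x / real N" for i
  define c where "c = 2 powr \<bar>\<nu> - 1\<bar> * x powr (\<nu> - 1)"
  have ends: "q 0 = x" "q N = 2 * x"
    unfolding q_def using N by auto
  have width: "q (Suc i) - q i = x / real N" for i
    unfolding q_def using N by (simp add: field_simps)
  have "0 \<le> x / real N"
    using x by simp
  then have step: "q i \<le> q (Suc i)" for i
    using width[of i] by linarith
  have inside: "x \<le> q i" "i \<le> N \<Longrightarrow> q i \<le> 2 * x" for i
    unfolding q_def using x N by (auto simp: field_simps)
  let ?g = "\<lambda>t. t powr (\<nu> - 1) * \<bar>f t\<bar>"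
  have "block_integral f \<nu> x = (\<Sum>i<N. integral {q i..q (Suc i)} ?g)"
    unfolding block_integral_def
    using integral_sum_partition[of N q ?g] step admissible_integrable_powr(2)[OF adm x] ends by simp
  also have "\<dots> \<le> (\<Sum>i<N. \<eta> + x / real N * c * total_variation f (q i) (q (Suc i)))"
  proof (rule sum_mono)
    fix i assume "i \<in> {..<N}"
    then have sub: "x \<le> q i" "q i \<le> q (Suc i)" "q (Suc i) \<le> 2 * x"
      using inside[of i] inside[of "Suc i"] step[of i] by auto
    have "integral {q i..q (Suc i)} ?g \<le> \<bar>integral {q i..q (Suc i)} (\<lambda>t. t powr (\<nu> - 1) * f t)\<bar>
        + (q (Suc i) - q i) * c * total_variation f (q i) (q (Suc i))"
    proof (rule integral_weighted_abs_le)
      show "bounded_variation_on f (q i) (q (Suc i))"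
        using admissible_bounded_variation_on[OF adm] sub x by auto
      show "?g integrable_on {q i..q (Suc i)}"
        using admissible_integrable_powr(2)[OF adm] sub x by auto
      fix t assume "t \<in> {q i..q (Suc i)}"
      then show "0 \<le> t powr (\<nu> - 1) \<and> t powr (\<nu> - 1) \<le> c"
        unfolding c_def using powr_doubling_bounds(1)[OF x] sub by auto
    qed (fact sub(2))
    then show "integral {q i..q (Suc i)} ?g \<le> \<eta> + x / real N * c * total_variation f (q i) (q (Suc i))"
      using osc[OF sub] width[of i] by simp
  qed
  also have "\<dots> = real N * \<eta> + x / real N * c * (\<Sum>i<N. total_variation f (q i) (q (Suc i)))"
    by (simp add: sum.distrib sum_distrib_left)
  also have "\<dots> \<le> real N * \<eta> + x / real N * c * total_variation f x (2 * x)"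
  proof -
    have "(\<Sum>i<N. total_variation f (q i) (q (Suc i))) \<le> total_variation f x (2 * x)"
      using sum_total_variation_le[of N q f] step admissible_bounded_variation_on[OF adm] x ends by simp
    moreover have "0 \<le> x / real N * c"
      unfolding c_def using x by simp
    ultimately show ?thesis
      by (intro add_left_mono mult_left_mono)
  qed
  also have "x / real N * c = 2 powr \<bar>\<nu> - 1\<bar> * x powr \<nu> / real N"
    unfolding c_def using powr_mult_base[of x "\<nu> - 1"] x by simp
  finally show ?thesis .
qed

lemma abs_mult_powr_le_block_integral:
  fixes f :: "real \<Rightarrow> real"
  assumes adm: "admissible f" and x: "0 < x" and s: "x \<le> s" "s \<le> 2 * x"
  shows "\<bar>f s\<bar> * x powr \<nu>
    \<le> 2 powr \<bar>\<nu> - 1\<bar> * (block_integral f \<nu> x + 2 powr \<bar>\<nu> - 1\<bar> * x powr \<nu> * total_variation f x (2 * x))"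
proof -
  let ?V = "total_variation f x (2 * x)" and ?\<kappa> = "2 powr \<bar>\<nu> - 1\<bar>"
  let ?g = "\<lambda>t. t powr (\<nu> - 1) * \<bar>f t\<bar>"
  have bv: "bounded_variation_on f x (2 * x)"
    using admissible_bounded_variation_on[OF adm] x by auto
  have gi: "?g integrable_on {x..2 * x}"
    using admissible_integrable_powr(2)[OF adm x] .
  have xx: "x * x powr (\<nu> - 1) = x powr \<nu>"
    using powr_mult_base[of x "\<nu> - 1"] x by simp
  have "\<bar>f s\<bar> * x powr \<nu> = integral {x..2 * x} (\<lambda>t. x powr (\<nu> - 1) * \<bar>f s\<bar>)"
    using x by (simp flip: xx)
  also have "\<dots> \<le> integral {x..2 * x} (\<lambda>t. ?\<kappa> * (?g t + ?\<kappa> * x powr (\<nu> - 1) * ?V))"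
  proof (rule integral_le)
    show "(\<lambda>t. ?\<kappa> * (?g t + ?\<kappa> * x powr (\<nu> - 1) * ?V)) integrable_on {x..2 * x}"
      by (intro integrable_on_mult_right integrable_add gi Henstock_Kurzweil_Integration.integrable_const_ivl)
    fix t assume t: "t \<in> {x..2 * x}"
    have "\<bar>f s\<bar> \<le> \<bar>f t\<bar> + ?V"
      using abs_diff_le_total_variation_within[OF bv, of t s] t s by auto
    then have "x powr (\<nu> - 1) * \<bar>f s\<bar> \<le> ?\<kappa> * t powr (\<nu> - 1) * (\<bar>f t\<bar> + ?V)"
      using powr_doubling_bounds(2)[OF x, of t "\<nu> - 1"] t
      by (intro mult_mono) auto
    also have "\<dots> = ?\<kappa> * (?g t + t powr (\<nu> - 1) * ?V)"
      by (simp add: algebra_simps)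
    also have "\<dots> \<le> ?\<kappa> * (?g t + ?\<kappa> * x powr (\<nu> - 1) * ?V)"
      using powr_doubling_bounds(1)[OF x, of t "\<nu> - 1"] t total_variation_nonneg[OF bv] x
      by (intro mult_left_mono add_left_mono mult_right_mono) auto
    finally show "x powr (\<nu> - 1) * \<bar>f s\<bar> \<le> ?\<kappa> * (?g t + ?\<kappa> * x powr (\<nu> - 1) * ?V)" .
  qed (rule Henstock_Kurzweil_Integration.integrable_const_ivl)
  also have "\<dots> = ?\<kappa> * integral {x..2 * x} (\<lambda>t. ?g t + ?\<kappa> * x powr (\<nu> - 1) * ?V)"
    by (rule integral_mult_right)
  also have "integral {x..2 * x} (\<lambda>t. ?g t + ?\<kappa> * x powr (\<nu> - 1) * ?V)
      = block_integral f \<nu> x + ?\<kappa> * (x * x powr (\<nu> - 1)) * ?V"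
    unfolding block_integral_def
    using integral_add[OF gi Henstock_Kurzweil_Integration.integrable_const_ivl, of "?\<kappa> * x powr (\<nu> - 1) * ?V"] x
    by simp
  finally show ?thesis
    by (simp only: xx)
qed

lemma admissible_bounded_at_top:
  assumes adm: "admissible f"
  obtains B where "0 \<le> B" "\<And>t. 1 \<le> t \<Longrightarrow> \<bar>f t\<bar> \<le> B"
proof -
  have "\<forall>\<^sub>F t in at_top. \<bar>f t\<bar> < 1"
    using tendstoD[of f 0 at_top 1] adm unfolding admissible_def by (simp add: dist_real_def)
  then obtain X where X: "\<And>t. X \<le> t \<Longrightarrow> \<bar>f t\<bar> < 1"
    unfolding eventually_at_top_linorder by blast
  have bv: "bounded_variation_on f 1 (max X 1)"
    using admissible_bounded_variation_on[OF adm] by simp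
  have "\<bar>f t\<bar> \<le> 1 + \<bar>f 1\<bar> + total_variation f 1 (max X 1)" if "1 \<le> t" for t
  proof (cases "X \<le> t")
    case True
    then show ?thesis
      using X[of t] total_variation_nonneg[OF bv] by simp
  next
    case False
    then have "\<bar>f t - f 1\<bar> \<le> total_variation f 1 (max X 1)"
      using abs_diff_le_total_variation_within[OF bv, of 1 t] that by simp
    then show ?thesis
      by linarith
  qed
  moreover have "0 \<le> 1 + \<bar>f 1\<bar> + total_variation f 1 (max X 1)"
    using total_variation_nonneg[OF bv] by simp
  ultimately show thesis
    using that by blast
qed

lemma block_integral_le_powr:
  assumes adm: "admissible f" and B: "\<And>t. 1 \<le> t \<Longrightarrow> \<bar>f t\<bar> \<le> B" and x: "1 \<le> x"
  shows "block_integral f \<nu> x \<le> 2 powr \<bar>\<nu> - 1\<bar> * B * x powr \<nu>"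
proof -
  have x0: "0 < x"
    using x by simp
  have "block_integral f \<nu> x \<le> integral {x..2 * x} (\<lambda>t. 2 powr \<bar>\<nu> - 1\<bar> * x powr (\<nu> - 1) * B)"
    unfolding block_integral_def
  proof (rule integral_le[OF admissible_integrable_powr(2)[OF adm x0]])
    fix t assume t: "t \<in> {x..2 * x}"
    then have "t powr (\<nu> - 1) \<le> 2 powr \<bar>\<nu> - 1\<bar> * x powr (\<nu> - 1)" "\<bar>f t\<bar> \<le> B"
      using powr_doubling_bounds(1)[OF x0] B x by auto
    then show "t powr (\<nu> - 1) * \<bar>f t\<bar> \<le> 2 powr \<bar>\<nu> - 1\<bar> * x powr (\<nu> - 1) * B"
      by (intro mult_mono) auto
  qed (rule Henstock_Kurzweil_Integration.integrable_const_ivl)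
  also have "\<dots> = 2 powr \<bar>\<nu> - 1\<bar> * B * (x * x powr (\<nu> - 1))"
    using x by (simp add: algebra_simps)
  also have "x * x powr (\<nu> - 1) = x powr \<nu>"
    using powr_mult_base[of x "\<nu> - 1"] x by simp
  finally show ?thesis .
qed

section \<open>Decay of GM functions\<close>

lemma admissible_integrable_abs_div:
  assumes adm: "admissible f" and "0 < a"
  shows "(\<lambda>t. \<bar>f t\<bar> / t) integrable_on {a..b}"
proof -
  have "continuous_on {a..b} inverse"
    using assms(2) by (intro continuous_intros) auto
  from admissible_integrable_times_continuous(2)[OF adm _ this] show ?thesis
    using assms(2) by (simp add: divide_inverse mult.commute)
qed

lemma integral_abs_div_le_block_integrals:
  fixes f :: "real \<Rightarrow> real"
  assumes adm: "admissible f" and y: "0 < y" and \<nu>: "0 < \<nu>"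
  shows "integral {y..2 ^ n * y} (\<lambda>t. \<bar>f t\<bar> / t) \<le> y powr - \<nu> * (\<Sum>i<n. block_integral f \<nu> (2 ^ i * y))"
proof -
  define q :: "nat \<Rightarrow> real" where "q i = 2 ^ i * y" for i
  have q: "0 < q i" "y \<le> q i" "q (Suc i) = 2 * q i" for i
    unfolding q_def using y by auto
  have "integral {q 0..q n} (\<lambda>t. \<bar>f t\<bar> / t) = (\<Sum>i<n. integral {q i..q (Suc i)} (\<lambda>t. \<bar>f t\<bar> / t))"
    using q admissible_integrable_abs_div[OF adm] by (intro integral_sum_partition) auto
  also have "\<dots> \<le> (\<Sum>i<n. y powr - \<nu> * block_integral f \<nu> (q i))"
  proof (rule sum_mono)
    fix i
    have "integral {q i..q (Suc i)} (\<lambda>t. \<bar>f t\<bar> / t)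
        \<le> integral {q i..q (Suc i)} (\<lambda>t. y powr - \<nu> * (t powr (\<nu> - 1) * \<bar>f t\<bar>))"
    proof (rule integral_le)
      show "(\<lambda>t. \<bar>f t\<bar> / t) integrable_on {q i..q (Suc i)}"
        using admissible_integrable_abs_div[OF adm q(1)] .
      show "(\<lambda>t. y powr - \<nu> * (t powr (\<nu> - 1) * \<bar>f t\<bar>)) integrable_on {q i..q (Suc i)}"
        using admissible_integrable_powr(2)[OF adm q(1)] by (rule integrable_on_mult_right)
      fix t assume t: "t \<in> {q i..q (Suc i)}"
      then have t0: "0 < t" and "y \<le> t"
        using q[of i] by auto
      then have "t powr - \<nu> \<le> y powr - \<nu>"
        using y \<nu> by (intro powr_mono2') auto
      moreover have "t powr - \<nu> * t powr (\<nu> - 1) = t powr - 1"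
        by (simp add: powr_add[symmetric])
      then have "1 / t = t powr - \<nu> * t powr (\<nu> - 1)"
        using t0 by (simp add: powr_minus_divide)
      ultimately have "1 / t \<le> y powr - \<nu> * t powr (\<nu> - 1)"
        by (simp add: mult_right_mono)
      then have "1 / t * \<bar>f t\<bar> \<le> y powr - \<nu> * t powr (\<nu> - 1) * \<bar>f t\<bar>"
        by (rule mult_right_mono) simp
      then show "\<bar>f t\<bar> / t \<le> y powr - \<nu> * (t powr (\<nu> - 1) * \<bar>f t\<bar>)"
        by (simp add: mult.assoc)
    qed
    then show "integral {q i..q (Suc i)} (\<lambda>t. \<bar>f t\<bar> / t) \<le> y powr - \<nu> * block_integral f \<nu> (q i)"
      unfolding block_integral_def q(3) by simp
  qed
  finally show ?thesis
    unfolding q_def by (simp add: sum_distrib_left)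
qed

lemma GM_dyadic_variation_le:
  assumes GM: "GM f" and \<nu>: "0 < \<nu>"
  obtains p K where "1 \<le> p" "0 < K"
    "\<And>k. p \<le> k \<Longrightarrow> total_variation f (2 ^ k) (2 * 2 ^ k)
        \<le> K * (2 ^ k) powr - \<nu> * (\<Sum>i<2 * p. block_integral f \<nu> (2 ^ (k - p + i)))"
proof -
  have adm: "admissible f"
    using GM unfolding GM_def by auto
  obtain C lam where C: "1 < C" and lam: "1 < lam"
    and GM_ineq: "\<And>x. 0 < x \<Longrightarrow> total_variation f x (2 * x) \<le> C * integral {x / lam..lam * x} (\<lambda>t. \<bar>f t\<bar> / t)"
    using GM unfolding GM_def by auto
  obtain n where "lam < 2 ^ n"
    using real_arch_pow[of 2 lam] by auto
  define p where "p = max 1 n"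
  have "(2::real) ^ n \<le> 2 ^ p"
    unfolding p_def by (intro power_increasing) auto
  then have lam_p: "lam \<le> 2 ^ p"
    using \<open>lam < 2 ^ n\<close> by linarith
  have p: "1 \<le> p"
    unfolding p_def by simp
  have "total_variation f (2 ^ k) (2 * 2 ^ k)
      \<le> C * (2 ^ p) powr \<nu> * (2 ^ k) powr - \<nu> * (\<Sum>i<2 * p. block_integral f \<nu> (2 ^ (k - p + i)))"
    if k: "p \<le> k" for k
  proof -
    define y :: real where "y = 2 ^ (k - p)"
    have y: "0 < y" "2 ^ k = 2 ^ p * y"
      unfolding y_def using k by (auto simp flip: power_add)
    have "lam * 2 ^ k \<le> 2 ^ p * 2 ^ k"
      using lam_p by (intro mult_right_mono) auto
    also have "\<dots> = 2 ^ (2 * p) * y"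
      by (simp add: y(2) mult_2 power_add)
    finally have sub: "y \<le> 2 ^ k / lam" "lam * 2 ^ k \<le> 2 ^ (2 * p) * y"
      using y lam lam_p by (auto simp: field_simps)
    have "integral {2 ^ k / lam..lam * 2 ^ k} (\<lambda>t. \<bar>f t\<bar> / t) \<le> integral {y..2 ^ (2 * p) * y} (\<lambda>t. \<bar>f t\<bar> / t)"
      using sub y lam admissible_integrable_abs_div[OF adm] by (intro integral_subset_le) auto
    also have "\<dots> \<le> y powr - \<nu> * (\<Sum>i<2 * p. block_integral f \<nu> (2 ^ i * y))"
      by (rule integral_abs_div_le_block_integrals[OF adm y(1) \<nu>])
    also have "y powr - \<nu> = (2 ^ p) powr \<nu> * (2 ^ k) powr - \<nu>"
      using y by (simp add: powr_mult powr_minus field_simps)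
    also have "(\<lambda>i. 2 ^ i * y) = (\<lambda>i. 2 ^ (k - p + i))"
      unfolding y_def by (simp add: power_add mult.commute)
    finally have I: "integral {2 ^ k / lam..lam * 2 ^ k} (\<lambda>t. \<bar>f t\<bar> / t)
        \<le> (2 ^ p) powr \<nu> * (2 ^ k) powr - \<nu> * (\<Sum>i<2 * p. block_integral f \<nu> (2 ^ (k - p + i)))" .
    have "total_variation f (2 ^ k) (2 * 2 ^ k) \<le> C * integral {2 ^ k / lam..lam * 2 ^ k} (\<lambda>t. \<bar>f t\<bar> / t)"
      using GM_ineq[of "2 ^ k"] by simp
    also have "\<dots> \<le> C * ((2 ^ p) powr \<nu> * (2 ^ k) powr - \<nu> * (\<Sum>i<2 * p. block_integral f \<nu> (2 ^ (k - p + i))))"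
      using I C by (intro mult_left_mono) auto
    finally show ?thesis
      by (simp add: mult.assoc)
  qed
  moreover have "0 < C * (2 ^ p) powr \<nu>"
    using C by simp
  ultimately show thesis
    using that p by blast
qed

lemma improper_integral_0_inf_Cauchy:
  assumes imp: "improper_integral_0_inf \<phi> L" and \<epsilon>: "0 < \<epsilon>"
  obtains X where "\<And>u v. X \<le> u \<Longrightarrow> u \<le> v \<Longrightarrow> \<bar>integral {u..v} \<phi>\<bar> \<le> \<epsilon>"
proof -
  have int: "\<And>a b. 0 < a \<Longrightarrow> a \<le> b \<Longrightarrow> \<phi> integrable_on {a..b}"
    and lim: "((\<lambda>(a, b). integral {a..b} \<phi>) \<longlongrightarrow> L) (at_right 0 \<times>\<^sub>F at_top)"
    using imp unfolding improper_integral_0_inf_def by auto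
  have "\<forall>\<^sub>F p in at_right 0 \<times>\<^sub>F at_top. dist ((\<lambda>(a, b). integral {a..b} \<phi>) p) L < \<epsilon> / 2"
    using tendstoD[OF lim, of "\<epsilon> / 2"] \<epsilon> by simp
  then obtain Pa Pb where Pa: "eventually Pa (at_right (0::real))" and Pb: "eventually Pb (at_top :: real filter)"
    and P: "\<And>a b. Pa a \<Longrightarrow> Pb b \<Longrightarrow> \<bar>integral {a..b} \<phi> - L\<bar> < \<epsilon> / 2"
    unfolding eventually_prod_filter by (auto simp: dist_real_def)
  obtain a where a: "Pa a" "0 < a"
    using eventually_happens[OF eventually_conj[OF Pa eventually_at_right_less]] by auto
  obtain N where N: "\<And>b. N \<le> b \<Longrightarrow> Pb b"
    using Pb unfolding eventually_at_top_linorder by blast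
  show thesis
  proof (rule that)
    fix u v assume u: "max N a \<le> u" and "u \<le> v"
    have "integral {a..u} \<phi> + integral {u..v} \<phi> = integral {a..v} \<phi>"
      using u \<open>u \<le> v\<close> int[of a v] a
      by (intro Henstock_Kurzweil_Integration.integral_combine) auto
    moreover have "\<bar>integral {a..u} \<phi> - L\<bar> < \<epsilon> / 2" "\<bar>integral {a..v} \<phi> - L\<bar> < \<epsilon> / 2"
      using P[OF a(1) N] u \<open>u \<le> v\<close> by auto
    ultimately show "\<bar>integral {u..v} \<phi>\<bar> \<le> \<epsilon>"
      by linarith
  qed
qed

lemma ex_power2_bracket:
  fixes s :: real
  assumes "1 \<le> s"
  shows "\<exists>k. 2 ^ k \<le> s \<and> s < 2 ^ Suc k"
proof -
  obtain n where "s < 2 ^ n"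
    using real_arch_pow[of 2 s] by auto
  define m where "m = (LEAST j. s < (2::real) ^ j)"
  have m: "s < 2 ^ m"
    unfolding m_def by (rule LeastI) fact
  then obtain k where k: "m = Suc k"
    using assms by (cases m) auto
  have "\<not> s < 2 ^ k"
    using Least_le[of "\<lambda>j. s < (2::real) ^ j" k] k unfolding m_def by auto
  then show ?thesis
    using m k by (intro exI[of _ k]) auto
qed

lemma block_integral_neighbour_recursion:
  fixes f :: "real \<Rightarrow> real" and N :: nat
  assumes adm: "admissible f" and imp: "improper_integral_0_inf (\<lambda>t. t powr (\<nu> - 1) * f t) L"
    and N: "0 < N" and K: "0 \<le> K"
    and TV: "\<And>k. p \<le> k \<Longrightarrow> total_variation f (2 ^ k) (2 * 2 ^ k)
        \<le> K * (2 ^ k) powr - \<nu> * (\<Sum>i<2 * p. block_integral f \<nu> (2 ^ (k - p + i)))"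
    and \<epsilon>: "0 < \<epsilon>"
  shows "\<forall>\<^sub>F k in sequentially. block_integral f \<nu> (2 ^ k)
    \<le> \<epsilon> + 2 powr \<bar>\<nu> - 1\<bar> * K / real N * (\<Sum>i<2 * p. block_integral f \<nu> (2 ^ (k - p + i)))"
proof -
  define \<kappa> :: real where "\<kappa> = 2 powr \<bar>\<nu> - 1\<bar>"
  obtain X where osc: "\<And>u v. X \<le> u \<Longrightarrow> u \<le> v \<Longrightarrow>
      \<bar>integral {u..v} (\<lambda>t. t powr (\<nu> - 1) * f t)\<bar> \<le> \<epsilon> / real N"
    using improper_integral_0_inf_Cauchy[OF imp, of "\<epsilon> / real N"] \<epsilon> N by auto
  obtain m where m: "X < 2 ^ m"
    using real_arch_pow[of 2 X] by auto
  have "block_integral f \<nu> (2 ^ k) \<le> \<epsilon> + \<kappa> * K / real N * (\<Sum>i<2 * p. block_integral f \<nu> (2 ^ (k - p + i)))"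
    if k: "max p m \<le> k" for k
  proof -
    have "(2::real) ^ m \<le> 2 ^ k"
      using k by (intro power_increasing) auto
    then have "X \<le> 2 ^ k"
      using m by linarith
    then have "block_integral f \<nu> (2 ^ k)
        \<le> real N * (\<epsilon> / real N) + \<kappa> * (2 ^ k) powr \<nu> / real N * total_variation f (2 ^ k) (2 * 2 ^ k)"
      unfolding \<kappa>_def using osc by (intro block_integral_le_oscillation[OF adm _ N]) auto
    also have "\<dots> \<le> \<epsilon> + \<kappa> * (2 ^ k) powr \<nu> / real N
        * (K * (2 ^ k) powr - \<nu> * (\<Sum>i<2 * p. block_integral f \<nu> (2 ^ (k - p + i))))"
      using TV[of k] k N unfolding \<kappa>_def by (intro add_mono mult_left_mono) auto
    also have "\<dots> = \<epsilon> + \<kappa> * K / real N * (\<Sum>i<2 * p. block_integral f \<nu> (2 ^ (k - p + i)))"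
      by (simp add: field_simps powr_add[symmetric])
    finally show ?thesis .
  qed
  then show ?thesis
    unfolding eventually_sequentially \<kappa>_def by blast
qed

lemma GM_block_integrals_tendsto_zero:
  assumes GM: "GM f" and \<nu>: "0 < \<nu>"
    and imp: "improper_integral_0_inf (\<lambda>t. t powr (\<nu> - 1) * f t) L"
  shows "(\<lambda>k. block_integral f \<nu> (2 ^ k)) \<longlonglongrightarrow> 0"
proof -
  have adm: "admissible f"
    using GM unfolding GM_def by auto
  obtain p K where p: "1 \<le> p" and K: "0 < K"
    and TV: "\<And>k. p \<le> k \<Longrightarrow> total_variation f (2 ^ k) (2 * 2 ^ k)
        \<le> K * (2 ^ k) powr - \<nu> * (\<Sum>i<2 * p. block_integral f \<nu> (2 ^ (k - p + i)))"
    using GM_dyadic_variation_le[OF GM \<nu>] by blast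
  define \<rho> :: real where "\<rho> = 2 powr \<nu>"
  define \<kappa> :: real where "\<kappa> = 2 powr \<bar>\<nu> - 1\<bar>"
  have \<rho>: "1 \<le> \<rho>"
    unfolding \<rho>_def using \<nu> by (simp add: ge_one_powr_ge_zero)
  have pow: "(2 ^ k) powr \<nu> = \<rho> ^ k" for k
    unfolding \<rho>_def by (simp add: powr_realpow[symmetric] powr_powr powr_power mult.commute)
  define N :: nat where "N = nat \<lceil>\<kappa> * K * (8 * real p * \<rho> ^ p)\<rceil> + 1"
  have N: "0 < N" "\<kappa> * K * (8 * real p * \<rho> ^ p) \<le> real N"
    unfolding N_def by linarith+
  have "0 < \<kappa>"
    unfolding \<kappa>_def by simp
  then have \<theta>: "0 < \<kappa> * K / real N" "\<kappa> * K / real N * (8 * real p * \<rho> ^ p) \<le> 1"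
    using K N by (auto simp: field_simps)
  obtain B where B: "0 \<le> B" "\<And>t. 1 \<le> t \<Longrightarrow> \<bar>f t\<bar> \<le> B"
    using admissible_bounded_at_top[OF adm] by blast
  show ?thesis
  proof (rule neighbour_recursion_tendsto_zero[OF _ p \<rho> \<theta>])
    show "0 \<le> block_integral f \<nu> (2 ^ k)" for k
      using block_integral_nonneg[OF adm] by simp
    show "block_integral f \<nu> (2 ^ k) \<le> (\<kappa> * B) * \<rho> ^ k" for k
      using block_integral_le_powr[OF adm B(2), of "2 ^ k" \<nu>] unfolding \<kappa>_def pow by simp
    show "\<forall>\<^sub>F k in sequentially. block_integral f \<nu> (2 ^ k)
        \<le> \<epsilon> + \<kappa> * K / real N * (\<Sum>i<2 * p. block_integral f \<nu> (2 ^ (k - p + i)))" if "0 < \<epsilon>" for \<epsilon>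
      unfolding \<kappa>_def using block_integral_neighbour_recursion[OF adm imp N(1) _ TV that] K by simp
  qed
qed

lemma abs_powr_mult_le_neighbour_blocks:
  fixes f :: "real \<Rightarrow> real"
  assumes adm: "admissible f" and \<nu>: "0 < \<nu>" and K: "0 \<le> K"
    and TV: "total_variation f (2 ^ k) (2 * 2 ^ k)
        \<le> K * (2 ^ k) powr - \<nu> * (\<Sum>i<2 * p. block_integral f \<nu> (2 ^ (k - p + i)))"
    and s: "2 ^ k \<le> s" "s \<le> 2 * 2 ^ k"
    and small: "\<And>j. k - p \<le> j \<Longrightarrow> block_integral f \<nu> (2 ^ j) \<le> \<delta>"
  shows "\<bar>s powr \<nu> * f s\<bar> \<le> 2 powr \<nu> * 2 powr \<bar>\<nu> - 1\<bar> * (1 + 2 powr \<bar>\<nu> - 1\<bar> * K * (2 * real p)) * \<delta>"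
proof -
  define x :: real where "x = 2 ^ k"
  define \<kappa> :: real where "\<kappa> = 2 powr \<bar>\<nu> - 1\<bar>"
  have x: "0 < x"
    unfolding x_def by simp
  have \<kappa>: "0 < \<kappa>"
    unfolding \<kappa>_def by simp
  have "(\<Sum>i<2 * p. block_integral f \<nu> (2 ^ (k - p + i))) \<le> (\<Sum>i<2 * p. \<delta>)"
    using small by (intro sum_mono) auto
  then have "K * x powr - \<nu> * (\<Sum>i<2 * p. block_integral f \<nu> (2 ^ (k - p + i)))
      \<le> K * x powr - \<nu> * (2 * real p * \<delta>)"
    using K by (intro mult_left_mono) auto
  then have "total_variation f x (2 * x) \<le> K * x powr - \<nu> * (2 * real p * \<delta>)"
    using TV unfolding x_def by linarith
  have "\<bar>f s\<bar> * x powr \<nu> \<le> \<kappa> * (block_integral f \<nu> x + \<kappa> * x powr \<nu> * total_variation f x (2 * x))"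
    unfolding \<kappa>_def using abs_mult_powr_le_block_integral[OF adm x] s unfolding x_def by simp
  also have "\<dots> \<le> \<kappa> * (\<delta> + \<kappa> * x powr \<nu> * (K * x powr - \<nu> * (2 * real p * \<delta>)))"
    using small[of k] \<open>total_variation f x (2 * x) \<le> _\<close> \<kappa> unfolding x_def
    by (intro mult_left_mono add_mono) auto
  also have "\<dots> = \<kappa> * (1 + \<kappa> * K * (2 * real p)) * \<delta>"
    using x by (simp add: algebra_simps powr_add[symmetric])
  finally have fs: "\<bar>f s\<bar> * x powr \<nu> \<le> \<kappa> * (1 + \<kappa> * K * (2 * real p)) * \<delta>" .
  have "s powr \<nu> \<le> (2 * x) powr \<nu>"
    using s \<nu> unfolding x_def by (intro powr_mono2) auto
  then have "s powr \<nu> * \<bar>f s\<bar> \<le> (2 * x) powr \<nu> * \<bar>f s\<bar>"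
    by (rule mult_right_mono) simp
  then have "\<bar>s powr \<nu> * f s\<bar> \<le> 2 powr \<nu> * (\<bar>f s\<bar> * x powr \<nu>)"
    using x by (simp add: abs_mult powr_mult mult_ac)
  also have "\<dots> \<le> 2 powr \<nu> * (\<kappa> * (1 + \<kappa> * K * (2 * real p)) * \<delta>)"
    using fs by simp
  finally show ?thesis
    unfolding \<kappa>_def by (simp add: mult_ac)
qed

lemma GM_powr_tendsto_zero_at_top:
  assumes GM: "GM f" and \<nu>: "\<nu> \<noteq> 0"
    and imp: "improper_integral_0_inf (\<lambda>t. t powr (\<nu> - 1) * f t) L"
  shows "((\<lambda>t. t powr \<nu> * f t) \<longlongrightarrow> 0) at_top"
proof (cases "0 < \<nu>")
  case False
  then have "((\<lambda>t. t powr \<nu>) \<longlongrightarrow> 0) at_top"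
    using \<nu> by (intro tendsto_neg_powr filterlim_ident) auto
  moreover have "(f \<longlongrightarrow> 0) at_top"
    using GM unfolding GM_def admissible_def by auto
  ultimately show ?thesis
    using tendsto_mult by fastforce
next
  case True
  have adm: "admissible f"
    using GM unfolding GM_def by auto
  obtain p K where p: "1 \<le> p" and K: "0 < K"
    and TV: "\<And>k. p \<le> k \<Longrightarrow> total_variation f (2 ^ k) (2 * 2 ^ k)
        \<le> K * (2 ^ k) powr - \<nu> * (\<Sum>i<2 * p. block_integral f \<nu> (2 ^ (k - p + i)))"
    using GM_dyadic_variation_le[OF GM True] by blast
  define D where "D = 2 powr \<nu> * 2 powr \<bar>\<nu> - 1\<bar> * (1 + 2 powr \<bar>\<nu> - 1\<bar> * K * (2 * real p))"
  have D: "0 < D"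
    unfolding D_def using K by (simp add: add_pos_nonneg)
  show ?thesis
  proof (rule tendstoI)
    fix e :: real assume e: "0 < e"
    define \<delta> where "\<delta> = e / (2 * D)"
    obtain k0 where k0: "\<And>j. k0 \<le> j \<Longrightarrow> block_integral f \<nu> (2 ^ j) < \<delta>"
      using LIMSEQ_D[OF GM_block_integrals_tendsto_zero[OF GM True imp], of \<delta>] e D
        block_integral_nonneg[OF adm] unfolding \<delta>_def by force
    have "dist (s powr \<nu> * f s) 0 < e" if s: "2 ^ (k0 + p) \<le> s" for s :: real
    proof -
      have "1 \<le> s"
        using s one_le_power[of "2::real" "k0 + p"] by linarith
      then obtain k where k: "2 ^ k \<le> s" "s < 2 ^ Suc k"
        using ex_power2_bracket by blast
      have "(2::real) ^ (k0 + p) < 2 ^ Suc k"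
        using s k by linarith
      then have "k0 + p < Suc k"
        by (rule power_less_imp_less_exp[rotated]) simp
      then have "k0 + p \<le> k"
        by simp
      have small: "block_integral f \<nu> (2 ^ j) \<le> \<delta>" if "k - p \<le> j" for j
      proof -
        have "k0 \<le> j"
          using that \<open>k0 + p \<le> k\<close> by linarith
        then show ?thesis
          using k0[of j] by simp
      qed
      have "\<bar>s powr \<nu> * f s\<bar> \<le> D * \<delta>"
        unfolding D_def
      proof (rule abs_powr_mult_le_neighbour_blocks[OF adm True _ TV k(1) _ small])
        show "0 \<le> K" "p \<le> k" "s \<le> 2 * 2 ^ k"
          using K \<open>k0 + p \<le> k\<close> k(2) by auto
      qed
      also have "\<dots> < e"
        unfolding \<delta>_def using D e by (simp add: field_simps)
      finally show ?thesis
        by (simp add: dist_real_def)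
    qed
    then show "\<forall>\<^sub>F s in at_top. dist (s powr \<nu> * f s) 0 < e"
      unfolding eventually_at_top_linorder by blast
  qed
qed

section \<open>Improper integrals\<close>

lemma has_RS_integral_powr:
  assumes adm: "admissible f" and ab: "0 < a" "a \<le> b"
  shows "has_RS_integral (\<lambda>t. t powr \<nu>) f a b
           (b powr \<nu> * f b - a powr \<nu> * f a - \<nu> * integral {a..b} (\<lambda>t. t powr (\<nu> - 1) * f t))"
proof -
  have "has_RS_integral (\<lambda>t. t powr \<nu>) f a b
      (b powr \<nu> * f b - a powr \<nu> * f a - integral {a..b} (\<lambda>t. \<nu> * t powr (\<nu> - 1) * f t))"
    using ab admissible_absolutely_integrable_on[OF adm] admissible_bounded_variation_on[OF adm]
    by (intro has_RS_integral_by_parts) (auto intro!: continuous_intros derivative_eq_intros)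
  moreover have "integral {a..b} (\<lambda>t. \<nu> * t powr (\<nu> - 1) * f t) = \<nu> * integral {a..b} (\<lambda>t. t powr (\<nu> - 1) * f t)"
    using integral_mult_right[of "{a..b}" \<nu> "\<lambda>t. t powr (\<nu> - 1) * f t"] by (simp add: mult.assoc)
  ultimately show ?thesis
    by simp
qed

lemma improper_integral_0_inf_unique:
  assumes "improper_integral_0_inf g L" "improper_integral_0_inf g L'"
  shows "L = L'"
proof -
  have "at_right (0::real) \<times>\<^sub>F (at_top :: real filter) \<noteq> bot"
    by (simp add: prod_filter_eq_bot)
  then show ?thesis
    using assms unfolding improper_integral_0_inf_def by (auto intro: tendsto_unique)
qed

lemma improper_RS_integral_powr_iff:
  fixes f :: "real \<Rightarrow> real"
  assumes adm: "admissible f" and \<nu>: "\<nu> \<noteq> 0"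
    and H0: "((\<lambda>t. t powr \<nu> * f t) \<longlongrightarrow> 0) (at_right 0)"
    and Hinf: "((\<lambda>t. t powr \<nu> * f t) \<longlongrightarrow> 0) at_top"
  shows "improper_RS_integral_0_inf (\<lambda>t. t powr \<nu>) f M
     \<longleftrightarrow> improper_integral_0_inf (\<lambda>t. t powr (\<nu> - 1) * f t) (- M / \<nu>)"
proof -
  define F where "F = at_right (0::real) \<times>\<^sub>F (at_top :: real filter)"
  define H where "H t = t powr \<nu> * f t" for t
  define J where "J p = integral {fst p..snd p} (\<lambda>t. t powr (\<nu> - 1) * f t)" for p :: "real \<times> real"
  define R where "R p = RS_integral (\<lambda>t. t powr \<nu>) f (fst p) (snd p)" for p :: "real \<times> real"
  have "\<forall>\<^sub>F p in F. 0 < fst p \<and> fst p \<le> snd p"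
    unfolding F_def eventually_prod_filter
    by (intro exI[of _ "\<lambda>a. 0 < a \<and> a < 1"] exI[of _ "\<lambda>b. 1 \<le> b"])
      (auto simp: eventually_at_right_less eventually_at_right_field intro!: eventually_ge_at_top exI[of _ 1])
  then have RJ: "\<forall>\<^sub>F p in F. R p = H (snd p) - H (fst p) - \<nu> * J p"
    unfolding R_def H_def J_def by eventually_elim (use RS_integral_eqI has_RS_integral_powr[OF adm] in auto)
  have HF: "((\<lambda>p. H (fst p)) \<longlongrightarrow> 0) F" "((\<lambda>p. H (snd p)) \<longlongrightarrow> 0) F"
    using filterlim_compose[OF H0 filtermap_fst_prod_filter[unfolded filterlim_def[symmetric]]]
      filterlim_compose[OF Hinf filtermap_snd_prod_filter[unfolded filterlim_def[symmetric]]]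
    unfolding F_def H_def by auto
  have "improper_RS_integral_0_inf (\<lambda>t. t powr \<nu>) f M \<longleftrightarrow> (R \<longlongrightarrow> M) F"
    unfolding improper_RS_integral_0_inf_def R_def F_def
    using has_RS_integral_powr[OF adm] by (auto simp: case_prod_beta')
  also have "\<dots> \<longleftrightarrow> (J \<longlongrightarrow> - M / \<nu>) F"
  proof
    assume "(R \<longlongrightarrow> M) F"
    then have "((\<lambda>p. (H (snd p) - H (fst p) - R p) / \<nu>) \<longlongrightarrow> (0 - 0 - M) / \<nu>) F"
      using \<nu> by (intro tendsto_intros HF)
    then have "((\<lambda>p. (H (snd p) - H (fst p) - R p) / \<nu>) \<longlongrightarrow> - M / \<nu>) F"
      by simp
    then show "(J \<longlongrightarrow> - M / \<nu>) F"
      by (rule Lim_transform_eventually) (use RJ \<nu> in \<open>auto elim: eventually_mono\<close>)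
  next
    assume "(J \<longlongrightarrow> - M / \<nu>) F"
    then have "((\<lambda>p. H (snd p) - H (fst p) - \<nu> * J p) \<longlongrightarrow> 0 - 0 - \<nu> * (- M / \<nu>)) F"
      by (intro tendsto_intros HF)
    then have "((\<lambda>p. H (snd p) - H (fst p) - \<nu> * J p) \<longlongrightarrow> M) F"
      using \<nu> by simp
    then show "(R \<longlongrightarrow> M) F"
      by (rule Lim_transform_eventually) (use RJ \<nu> in \<open>auto elim: eventually_mono\<close>)
  qed
  also have "\<dots> \<longleftrightarrow> improper_integral_0_inf (\<lambda>t. t powr (\<nu> - 1) * f t) (- M / \<nu>)"
    unfolding improper_integral_0_inf_def J_def F_def
    using has_RS_integral_powr[OF adm] admissible_integrable_powr(1)[OF adm]
    by (auto simp: case_prod_beta')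
  finally show ?thesis .
qed

theorem mainTheorem2:
  fixes f :: "real \<Rightarrow> real" and \<nu> :: real
  assumes "GM f"
    and "\<nu> \<noteq> 0"
    and "((\<lambda>t. t powr \<nu> * f t) \<longlongrightarrow> 0) (at_right 0)"
  shows "((\<exists>L. improper_integral_0_inf (\<lambda>t. t powr (\<nu> - 1) * f t) L) \<longleftrightarrow>
           (((\<lambda>t. t powr \<nu> * f t) \<longlongrightarrow> 0) at_top \<and>
            (\<exists>M. improper_RS_integral_0_inf (\<lambda>t. t powr \<nu>) f M)))
       \<and> (\<forall>L M. improper_integral_0_inf (\<lambda>t. t powr (\<nu> - 1) * f t) L \<longrightarrow>
                improper_RS_integral_0_inf (\<lambda>t. t powr \<nu>) f M \<longrightarrow>
                L = - M / \<nu>)"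
proof -
  have adm: "admissible f"
    using assms(1) unfolding GM_def by auto
  note decay = GM_powr_tendsto_zero_at_top[OF assms(1,2)]
  note by_parts = improper_RS_integral_powr_iff[OF adm assms(2,3)]
  have "(\<exists>L. improper_integral_0_inf (\<lambda>t. t powr (\<nu> - 1) * f t) L) \<longleftrightarrow>
           (((\<lambda>t. t powr \<nu> * f t) \<longlongrightarrow> 0) at_top \<and>
            (\<exists>M. improper_RS_integral_0_inf (\<lambda>t. t powr \<nu>) f M))"
  proof
    assume "\<exists>L. improper_integral_0_inf (\<lambda>t. t powr (\<nu> - 1) * f t) L"
    then obtain L where L: "improper_integral_0_inf (\<lambda>t. t powr (\<nu> - 1) * f t) L" ..
    then have "improper_RS_integral_0_inf (\<lambda>t. t powr \<nu>) f (- \<nu> * L)"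
      using by_parts[OF decay[OF L], of "- \<nu> * L"] assms(2) by simp
    with decay[OF L] show "((\<lambda>t. t powr \<nu> * f t) \<longlongrightarrow> 0) at_top
        \<and> (\<exists>M. improper_RS_integral_0_inf (\<lambda>t. t powr \<nu>) f M)"
      by blast
  qed (use by_parts in blast)
  moreover have "L = - M / \<nu>"
    if L: "improper_integral_0_inf (\<lambda>t. t powr (\<nu> - 1) * f t) L"
      and "improper_RS_integral_0_inf (\<lambda>t. t powr \<nu>) f M" for L M
    using by_parts[OF decay[OF L]] that improper_integral_0_inf_unique by blast
  ultimately show ?thesis
    by blast
qed

end
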